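(* Let $\mathcal{SB}=\langle\mathcal{L},A,\to,\text{supp}\rangle$ be a strongly saturated SBAF. Then every confident weakly coherent argument extension $E\subseteq A$ is a preferred extension of $\langle A,\to\rangle$.
   Context: A language is a triple $\mathcal{L}=\langle L,\overline{\cdot},n\rangle$: $L$ is a nonempty set of sentences; $\overline{\cdot}$ assigns to each $s\in L$ a set $\overline{s}\subseteq L$ of sentences incompatible with $s$, and is symmetric; $n$ is a partial naming function assigning to an argument $a$ a sentence $n(a)\in L$ (if undefined, put $\overline{n(a)}:=\emptyset$), with $\overline{n(\langle\{t\},t\rangle)}=\emptyset$. An argument is a pair $a=\langle Prem(a),Conc(a)\rangle$ with $Prem(a)$ a nonempty finite subset of $L$ and $Conc(a)\in L$; $Sent(a):=Prem(a)\cup\{Conc(a)\}$, $Sent(E):=\bigcup_{a\in E}Sent(a)$. The minimal argument for $s$ is $\langle\{s\},s\rangle$. A set $E$ supports $a$ if $Prem(a)\subseteq Sent(E)$; $E$ contains undercutting information for $a$ if $\overline{n(a)}\cap Sent(E)\neq\emptyset$. Argument $a$ attacks $b$ ($a\to b$) if $Conc(a)\in\overline{s}$ for some $s\in Sent(b)$ or $Conc(a)\in\overline{n(b)}$. An SBAF is $\langle\mathcal{L},A,\to,\text{supp}\rangle$ with $A$ a finite set of arguments. For $E\subseteq A$: $E$ defends $a\in A$ if for every $b\in A$ with $b\to a$ some element of $E$ attacks $b$; $E$ is conflict-free if no $a,b\in E$ with $a\to b$; admissible if conflict-free and defends all its elements; preferred if $\subseteq$-maximal among admissible sets. $E$ is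 weakly coherent if it is admissible and every $a\in A$ supported by $E$, for which $E$ contains no undercutting information and which $E$ defends, belongs to $E$. $S$ is compatible if no $s,t\in S$ with $s\in\overline t$. $Arg_s(S):=\{a\in A\mid Prem(a)\subseteq S\text{ and }\overline{n(a)}\cap S=\emptyset\}$; $R^S(E):=\{a\in A\mid a\in Arg_s(S)\text{ and }E\text{ defends }a\}$. For compatible $S$, $Init(S)$ is the largest admissible subset of $\{a\in A\mid Sent(a)\subseteq S\text{ and }\overline{n(a)}\cap S=\emptyset\}$, and $Arg_w(S)$ is the $\subseteq$-least set $E$ with $Init(S)\subseteq E$ and $R^S(E)=E$. A weakly adequate language extension is a compatible $S\subseteq Sent(A)$ with $Sent(a)\subseteq S$ for all $a\in Arg_w(S)$; it is confident if it is $\subseteq$-maximal among weakly adequate language extensions. An argument extension $E$ is confident weakly coherent if it is weakly coherent and $E=Arg_w(S)$ for some confident weakly adequate language extension $S$. The SBAF is strongly saturated if (i) for every $s\in Sent(A)$ for which some $t\in Sent(A)\cap\overline{s}$ exists, $A$ contains both the minimal argument for $s$ and the minimal argument for $t$, and (ii) for every $u\in Sent(A)$ with $u\in\overline{n(a)}$ for some $a\in A$, $A$ contains the minimal argument for $u$. *)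

theory Defs
  imports Main
begin

text \<open>The language is given by a set L of sentences, an incompatibility map inc
  (the overline operator) and a partial naming function nm (None = undefined).\<close>

type_synonym 's arg = "'s set \<times> 's"

definition Prem :: "'s arg \<Rightarrow> 's set" where "Prem a = fst a"
definition Conc :: "'s arg \<Rightarrow> 's" where "Conc a = snd a"

definition Sent :: "'s arg \<Rightarrow> 's set" where "Sent a = Prem a \<union> {Conc a}"
definition SentE :: "'s arg set \<Rightarrow> 's set" where "SentE E = (\<Union>a\<in>E. Sent a)"

definition minarg :: "'s \<Rightarrow> 's arg" where "minarg s = ({s}, s)"

definition ninc :: "('s \<Rightarrow> 's set) \<Rightarrow> ('s arg \<Rightarrow> 's option) \<Rightarrow> 's arg \<Rightarrow> 's set" where
  "ninc inc nm a = (case nm a of None \<Rightarrow> {} | Some s \<Rightarrow> inc s)"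

definition language :: "'s set \<Rightarrow> ('s \<Rightarrow> 's set) \<Rightarrow> ('s arg \<Rightarrow> 's option) \<Rightarrow> bool" where
  "language L inc nm \<longleftrightarrow> L \<noteq> {}
     \<and> (\<forall>s\<in>L. inc s \<subseteq> L)
     \<and> (\<forall>s\<in>L. \<forall>t\<in>L. t \<in> inc s \<longleftrightarrow> s \<in> inc t)
     \<and> (\<forall>a s. nm a = Some s \<longrightarrow> s \<in> L)
     \<and> (\<forall>t. ninc inc nm (minarg t) = {})"

definition is_argument :: "'s set \<Rightarrow> 's arg \<Rightarrow> bool" where
  "is_argument L a \<longleftrightarrow> finite (Prem a) \<and> Prem a \<noteq> {} \<and> Prem a \<subseteq> L \<and> Conc a \<in> L"

definition attacks :: "('s \<Rightarrow> 's set) \<Rightarrow> ('s arg \<Rightarrow> 's option) \<Rightarrow> 's arg \<Rightarrow> 's arg \<Rightarrow> bool" where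
  "attacks inc nm a b \<longleftrightarrow> (\<exists>s\<in>Sent b. Conc a \<in> inc s) \<or> Conc a \<in> ninc inc nm b"

definition SBAF :: "'s set \<Rightarrow> ('s \<Rightarrow> 's set) \<Rightarrow> ('s arg \<Rightarrow> 's option) \<Rightarrow> 's arg set \<Rightarrow> bool" where
  "SBAF L inc nm A \<longleftrightarrow> language L inc nm \<and> finite A \<and> (\<forall>a\<in>A. is_argument L a)"

definition defends :: "'a set \<Rightarrow> ('a \<Rightarrow> 'a \<Rightarrow> bool) \<Rightarrow> 'a set \<Rightarrow> 'a \<Rightarrow> bool" where
  "defends A att E a \<longleftrightarrow> (\<forall>b\<in>A. att b a \<longrightarrow> (\<exists>c\<in>E. att c b))"

definition conflict_free :: "('a \<Rightarrow> 'a \<Rightarrow> bool) \<Rightarrow> 'a set \<Rightarrow> bool" where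
  "conflict_free att E \<longleftrightarrow> (\<forall>a\<in>E. \<forall>b\<in>E. \<not> att a b)"

definition admissible :: "'a set \<Rightarrow> ('a \<Rightarrow> 'a \<Rightarrow> bool) \<Rightarrow> 'a set \<Rightarrow> bool" where
  "admissible A att E \<longleftrightarrow> E \<subseteq> A \<and> conflict_free att E \<and> (\<forall>a\<in>E. defends A att E a)"

definition preferred :: "'a set \<Rightarrow> ('a \<Rightarrow> 'a \<Rightarrow> bool) \<Rightarrow> 'a set \<Rightarrow> bool" where
  "preferred A att E \<longleftrightarrow> admissible A att E \<and> (\<forall>E'. admissible A att E' \<and> E \<subseteq> E' \<longrightarrow> E' = E)"

context
  fixes inc :: "'s \<Rightarrow> 's set" and nm :: "'s arg \<Rightarrow> 's option" and A :: "'s arg set"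
begin

definition supports :: "'s arg set \<Rightarrow> 's arg \<Rightarrow> bool" where
  "supports E a \<longleftrightarrow> Prem a \<subseteq> SentE E"

definition undercut_info :: "'s arg set \<Rightarrow> 's arg \<Rightarrow> bool" where
  "undercut_info E a \<longleftrightarrow> ninc inc nm a \<inter> SentE E \<noteq> {}"

definition weakly_coherent :: "'s arg set \<Rightarrow> bool" where
  "weakly_coherent E \<longleftrightarrow> admissible A (attacks inc nm) E
     \<and> (\<forall>a\<in>A. supports E a \<and> \<not> undercut_info E a \<and> defends A (attacks inc nm) E a \<longrightarrow> a \<in> E)"

definition compatible :: "'s set \<Rightarrow> bool" where
  "compatible S \<longleftrightarrow> (\<forall>s\<in>S. \<forall>t\<in>S. s \<notin> inc t)"

definition Arg_s :: "'s set \<Rightarrow> 's arg set" where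
  "Arg_s S = {a\<in>A. Prem a \<subseteq> S \<and> ninc inc nm a \<inter> S = {}}"

definition RS :: "'s set \<Rightarrow> 's arg set \<Rightarrow> 's arg set" where
  "RS S E = {a\<in>A. a \<in> Arg_s S \<and> defends A (attacks inc nm) E a}"

definition InitCand :: "'s set \<Rightarrow> 's arg set" where
  "InitCand S = {a\<in>A. Sent a \<subseteq> S \<and> ninc inc nm a \<inter> S = {}}"

definition Init :: "'s set \<Rightarrow> 's arg set" where
  "Init S = (THE E. E \<subseteq> InitCand S \<and> admissible A (attacks inc nm) E
      \<and> (\<forall>E'. E' \<subseteq> InitCand S \<and> admissible A (attacks inc nm) E' \<longrightarrow> E' \<subseteq> E))"

definition Arg_w :: "'s set \<Rightarrow> 's arg set" where
  "Arg_w S = (THE E. Init S \<subseteq> E \<and> RS S E = E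
      \<and> (\<forall>E'. Init S \<subseteq> E' \<and> RS S E' = E' \<longrightarrow> E \<subseteq> E'))"

definition weakly_adequate :: "'s set \<Rightarrow> bool" where
  "weakly_adequate S \<longleftrightarrow> compatible S \<and> S \<subseteq> SentE A \<and> (\<forall>a\<in>Arg_w S. Sent a \<subseteq> S)"

definition confident :: "'s set \<Rightarrow> bool" where
  "confident S \<longleftrightarrow> weakly_adequate S \<and> (\<forall>S'. weakly_adequate S' \<and> S \<subseteq> S' \<longrightarrow> S' = S)"

definition confident_weakly_coherent :: "'s arg set \<Rightarrow> bool" where
  "confident_weakly_coherent E \<longleftrightarrow> weakly_coherent E \<and> (\<exists>S. confident S \<and> E = Arg_w S)"

definition strongly_saturated :: bool where
  "strongly_saturated \<longleftrightarrow>
     (\<forall>s\<in>SentE A. (\<exists>t\<in>SentE A \<inter> inc s. True) \<longrightarrow>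
         minarg s \<in> A \<and> (\<forall>t\<in>SentE A \<inter> inc s. minarg t \<in> A))
     \<and> (\<forall>u\<in>SentE A. (\<exists>a\<in>A. u \<in> ninc inc nm a) \<longrightarrow> minarg u \<in> A)"

end

end

theory Submission
  imports Defs
begin

text \<open>Let \<open>E = Arg_w S\<close> for a confident \<open>S\<close> and let \<open>F \<supseteq> E\<close> be preferred. The minimal
  argument of a sentence of \<open>S\<close> lies in \<open>Init S \<subseteq> E \<subseteq> F\<close>, and the minimal argument of a
  sentence of \<open>F\<close> cannot attack \<open>F\<close>, since \<open>F\<close> would have to counter-attack it and thereby
  attack itself. With strong saturation this makes \<open>S' = S \<union> Sent(F)\<close> compatible and puts
  every argument of \<open>F\<close> among those built within \<open>S'\<close>. Maximality of \<open>F\<close> then gives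
  \<open>Init S' = F\<close> and \<open>RS S' F = F\<close>, so \<open>Arg_w S' = F\<close> and \<open>S'\<close> is weakly adequate.
  Confidence of \<open>S\<close> forces \<open>S' = S\<close>, hence \<open>F = E\<close>.\<close>

lemma defends_mono: "defends A att X a \<Longrightarrow> X \<subseteq> Y \<Longrightarrow> defends A att Y a"
  unfolding defends_def by blast

lemma admissible_insert:
  assumes "admissible A att F" "a \<in> A" "defends A att F a"
  shows "admissible A att (insert a F)"
proof -
  have not_attacked: "\<not> att c a" if "c \<in> F" for c
    using assms that unfolding admissible_def conflict_free_def defends_def by blast
  have "conflict_free att (insert a F)"
    using assms not_attacked unfolding admissible_def conflict_free_def defends_def by blast
  then show ?thesis
    using assms defends_mono[of A att _ _ "insert a F"] unfolding admissible_def by blast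
qed

lemma admissible_Union:
  assumes "conflict_free att (\<Union>C)" "\<And>X. X \<in> C \<Longrightarrow> admissible A att X"
  shows "admissible A att (\<Union>C)"
  using assms defends_mono[of A att _ _ "\<Union>C"] unfolding admissible_def by blast

lemma preferred_defended_mem:
  assumes "preferred A att F" "a \<in> A" "defends A att F a"
  shows "a \<in> F"
  using assms admissible_insert[of A att F a] unfolding preferred_def by blast

lemma admissible_subset_preferred:
  assumes "finite A" "admissible A att E"
  obtains F where "preferred A att F" "E \<subseteq> F"
proof -
  let ?P = "{F. admissible A att F \<and> E \<subseteq> F}"
  have "?P \<subseteq> Pow A"
    unfolding admissible_def by blast
  then have "finite ?P"
    using assms(1) by (meson finite_Pow_iff finite_subset)
  moreover have "?P \<noteq> {}"
    using assms(2) by blast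
  ultimately obtain F where "F \<in> ?P" and "\<forall>G\<in>?P. F \<subseteq> G \<longrightarrow> F = G"
    by (meson finite_has_maximal)
  then have "preferred A att F" "E \<subseteq> F"
    unfolding preferred_def by (auto dest: subset_trans)
  then show ?thesis
    using that by blast
qed

lemma preferredI_preferred_supersets:
  assumes "finite A" "admissible A att E"
    and "\<And>F. preferred A att F \<Longrightarrow> E \<subseteq> F \<Longrightarrow> F \<subseteq> E"
  shows "preferred A att E"
  unfolding preferred_def
proof (intro conjI allI impI)
  fix E' assume E': "admissible A att E' \<and> E \<subseteq> E'"
  then obtain F where "preferred A att F" "E' \<subseteq> F"
    using admissible_subset_preferred[OF assms(1)] by blast
  then show "E' = E"
    using assms(3) E' by blast
qed (fact assms(2))

lemma minarg_simps [simp]: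
  "Prem (minarg u) = {u}" "Conc (minarg u) = u" "Sent (minarg u) = {u}"
  by (simp_all add: minarg_def Prem_def Conc_def Sent_def)

lemma SentE_mono: "X \<subseteq> Y \<Longrightarrow> SentE X \<subseteq> SentE Y"
  unfolding SentE_def by blast

lemma SentE_subset_language:
  assumes "\<forall>a\<in>A. is_argument L a"
  shows "SentE A \<subseteq> L"
  using assms unfolding SentE_def Sent_def is_argument_def by blast

lemma ninc_minarg: "language L inc nm \<Longrightarrow> ninc inc nm (minarg u) = {}"
  unfolding language_def by blast

lemma attacks_minarg_iff: "language L inc nm \<Longrightarrow> attacks inc nm b (minarg u) \<longleftrightarrow> Conc b \<in> inc u"
  unfolding attacks_def by (simp add: ninc_minarg)

context
  fixes inc :: "'s \<Rightarrow> 's set" and nm :: "'s arg \<Rightarrow> 's option" and A :: "'s arg set"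
begin

lemma InitCand_conflict_free:
  assumes "compatible inc S"
  shows "conflict_free (attacks inc nm) (InitCand inc nm A S)"
  using assms unfolding conflict_free_def InitCand_def attacks_def compatible_def Sent_def by blast

lemma Init_eq_Union:
  assumes "compatible inc S"
  shows "Init inc nm A S = \<Union>{X. X \<subseteq> InitCand inc nm A S \<and> admissible A (attacks inc nm) X}"
    (is "_ = ?M")
proof -
  have "conflict_free (attacks inc nm) ?M"
    using InitCand_conflict_free[OF assms] unfolding conflict_free_def by blast
  then have "admissible A (attacks inc nm) ?M"
    by (rule admissible_Union) blast
  then show ?thesis
    unfolding Init_def by - (rule the_equality, blast+)
qed

lemma
  assumes "compatible inc S"
  shows Init_subset_InitCand: "Init inc nm A S \<subseteq> InitCand inc nm A S"
    and admissible_Init: "admissible A (attacks inc nm) (Init inc nm A S)"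
    and admissible_subset_Init:
      "\<lbrakk>X \<subseteq> InitCand inc nm A S; admissible A (attacks inc nm) X\<rbrakk> \<Longrightarrow> X \<subseteq> Init inc nm A S"
proof -
  have "conflict_free (attacks inc nm) (Init inc nm A S)"
    using InitCand_conflict_free[OF assms] unfolding Init_eq_Union[OF assms] conflict_free_def
    by blast
  then show "admissible A (attacks inc nm) (Init inc nm A S)"
    unfolding Init_eq_Union[OF assms] by (rule admissible_Union) blast
qed (auto simp: Init_eq_Union[OF assms])

lemma Init_subset_RS:
  assumes "compatible inc S"
  shows "Init inc nm A S \<subseteq> RS inc nm A S (Init inc nm A S)"
  using Init_subset_InitCand[OF assms] admissible_Init[OF assms]
  unfolding RS_def Arg_s_def InitCand_def admissible_def Sent_def by blast

lemma RS_mono: "X \<subseteq> Y \<Longrightarrow> RS inc nm A S X \<subseteq> RS inc nm A S Y"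
  unfolding RS_def by (auto intro: defends_mono)

lemma Arg_w_eq_lfp:
  assumes "compatible inc S"
  shows "Arg_w inc nm A S = lfp (\<lambda>X. Init inc nm A S \<union> RS inc nm A S X)"
proof -
  let ?I = "Init inc nm A S" and ?R = "RS inc nm A S"
  define G where "G = lfp (\<lambda>X. ?I \<union> ?R X)"
  have "mono (\<lambda>X. ?I \<union> ?R X)"
    by (rule monoI) (use RS_mono in blast)
  then have G_unfold: "G = ?I \<union> ?R G"
    unfolding G_def by (rule lfp_unfold)
  then have I_G: "?I \<subseteq> G"
    by (metis Un_upper1)
  have "?I \<subseteq> ?R G"
    using Init_subset_RS[OF assms] RS_mono[OF I_G] by (rule subset_trans)
  then have R_G: "?R G = G"
    using G_unfold by (metis Un_absorb1)
  have least: "G \<subseteq> X" if "?I \<subseteq> X" "?R X = X" for X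
    unfolding G_def using that by (intro lfp_lowerbound) simp
  show ?thesis
    unfolding Arg_w_def G_def[symmetric]
  proof (rule the_equality)
    show "?I \<subseteq> G \<and> ?R G = G \<and> (\<forall>X. ?I \<subseteq> X \<and> ?R X = X \<longrightarrow> G \<subseteq> X)"
      using I_G R_G least by blast
  next
    fix X assume "?I \<subseteq> X \<and> ?R X = X \<and> (\<forall>Y. ?I \<subseteq> Y \<and> ?R Y = Y \<longrightarrow> X \<subseteq> Y)"
    then show "X = G"
      using I_G R_G least by (meson subset_antisym)
  qed
qed

lemma Init_subset_Arg_w:
  assumes "compatible inc S"
  shows "Init inc nm A S \<subseteq> Arg_w inc nm A S"
proof -
  have "mono (\<lambda>X. Init inc nm A S \<union> RS inc nm A S X)"
    by (rule monoI) (use RS_mono in blast)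
  then show ?thesis
    unfolding Arg_w_eq_lfp[OF assms] by (subst lfp_unfold) blast+
qed

lemma Arg_w_eq_Init:
  assumes "RS inc nm A S (Init inc nm A S) = Init inc nm A S"
  shows "Arg_w inc nm A S = Init inc nm A S"
  unfolding Arg_w_def using assms by - (rule the_equality, blast+)

lemma admissible_minarg:
  assumes lang: "language L inc nm" and args: "\<forall>a\<in>A. is_argument L a"
    and "u \<in> L" "u \<notin> inc u" "minarg u \<in> A"
  shows "admissible A (attacks inc nm) {minarg u}"
proof -
  have "attacks inc nm (minarg u) b" if "b \<in> A" "attacks inc nm b (minarg u)" for b
  proof -
    have "Conc b \<in> inc u" "Conc b \<in> L"
      using that args attacks_minarg_iff[OF lang] unfolding is_argument_def by auto
    then have "u \<in> inc (Conc b)"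
      using lang \<open>u \<in> L\<close> unfolding language_def by blast
    then show ?thesis
      unfolding attacks_def Sent_def by auto
  qed
  then show ?thesis
    using assms attacks_minarg_iff[OF lang]
    unfolding admissible_def conflict_free_def defends_def by auto
qed

lemma minarg_mem_Init:
  assumes lang: "language L inc nm" and args: "\<forall>a\<in>A. is_argument L a"
    and S: "compatible inc S" and "u \<in> S" "u \<in> L" "minarg u \<in> A"
  shows "minarg u \<in> Init inc nm A S"
proof -
  have "u \<notin> inc u"
    using S \<open>u \<in> S\<close> unfolding compatible_def by blast
  then have "admissible A (attacks inc nm) {minarg u}"
    using admissible_minarg[OF lang args] assms by blast
  moreover have "{minarg u} \<subseteq> InitCand inc nm A S"
    using assms ninc_minarg[OF lang] unfolding InitCand_def by simp
  ultimately show ?thesis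
    using admissible_subset_Init[OF S] by blast
qed

lemma minarg_not_attacks_admissible:
  assumes lang: "language L inc nm" and F: "admissible A (attacks inc nm) F"
    and "u \<in> SentE F" "minarg u \<in> A" "b \<in> F"
  shows "\<not> attacks inc nm (minarg u) b"
proof
  assume "attacks inc nm (minarg u) b"
  then obtain c where "c \<in> F" "attacks inc nm c (minarg u)"
    using F assms unfolding admissible_def defends_def by blast
  moreover obtain d where "d \<in> F" "u \<in> Sent d"
    using \<open>u \<in> SentE F\<close> unfolding SentE_def by blast
  ultimately have "attacks inc nm c d"
    using attacks_minarg_iff[OF lang] unfolding attacks_def by blast
  then show False
    using F \<open>c \<in> F\<close> \<open>d \<in> F\<close> unfolding admissible_def conflict_free_def by blast
qed

lemma minarg_not_attacks_extension:
  assumes lang: "language L inc nm" and args: "\<forall>a\<in>A. is_argument L a"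
    and S: "compatible inc S" "S \<subseteq> L"
    and F: "admissible A (attacks inc nm) F" "Init inc nm A S \<subseteq> F"
    and "u \<in> S \<union> SentE F" "minarg u \<in> A" "b \<in> F"
  shows "\<not> attacks inc nm (minarg u) b"
proof (cases "u \<in> S")
  case True
  then have "minarg u \<in> F"
    using minarg_mem_Init[OF lang args S(1)] assms by blast
  then show ?thesis
    using F \<open>b \<in> F\<close> unfolding admissible_def conflict_free_def by blast
next
  case False
  then show ?thesis
    using minarg_not_attacks_admissible[OF lang F(1)] assms by blast
qed

lemma compatible_Un_SentE:
  assumes SBAF: "SBAF L inc nm A" and sat: "strongly_saturated inc nm A"
    and S: "compatible inc S" "S \<subseteq> SentE A"
    and F: "admissible A (attacks inc nm) F" "Init inc nm A S \<subseteq> F"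
  shows "compatible inc (S \<union> SentE F)"
  unfolding compatible_def
proof (intro ballI notI)
  have lang: "language L inc nm" and args: "\<forall>a\<in>A. is_argument L a"
    using SBAF unfolding SBAF_def by auto
  have SAL: "SentE A \<subseteq> L"
    using SentE_subset_language[OF args] .
  have SFA: "S \<union> SentE F \<subseteq> SentE A"
    using S(2) SentE_mono F(1) unfolding admissible_def by blast
  have no_inc_into_F: False if "t \<in> SentE F" "s \<in> S \<union> SentE F" "s \<in> inc t" for s t
  proof -
    obtain b where "b \<in> F" "t \<in> Sent b"
      using \<open>t \<in> SentE F\<close> unfolding SentE_def by blast
    moreover have "minarg s \<in> A"
      using sat that SFA unfolding strongly_saturated_def by blast
    moreover have "attacks inc nm (minarg s) b"
      using \<open>t \<in> Sent b\<close> \<open>s \<in> inc t\<close> unfolding attacks_def by auto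
    ultimately show False
      using minarg_not_attacks_extension[OF lang args S(1) _ F] S(2) SAL that(2) by blast
  qed
  fix s t assume st: "s \<in> S \<union> SentE F" "t \<in> S \<union> SentE F" "s \<in> inc t"
  then have "t \<in> inc s"
    using lang SFA SAL unfolding language_def by blast
  then show False
    using no_inc_into_F st S(1) unfolding compatible_def by blast
qed

lemma subset_InitCand_Un_SentE:
  assumes SBAF: "SBAF L inc nm A" and sat: "strongly_saturated inc nm A"
    and S: "compatible inc S" "S \<subseteq> SentE A"
    and F: "admissible A (attacks inc nm) F" "Init inc nm A S \<subseteq> F"
  shows "F \<subseteq> InitCand inc nm A (S \<union> SentE F)"
proof
  fix b assume "b \<in> F"
  have lang: "language L inc nm" and args: "\<forall>a\<in>A. is_argument L a"
    using SBAF unfolding SBAF_def by auto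
  have FA: "F \<subseteq> A"
    using F(1) unfolding admissible_def by blast
  have SFA: "S \<union> SentE F \<subseteq> SentE A"
    using S(2) SentE_mono[OF FA] by blast
  have "u \<notin> S \<union> SentE F" if "u \<in> ninc inc nm b" for u
  proof
    assume "u \<in> S \<union> SentE F"
    moreover have "minarg u \<in> A" if "u \<in> SentE A"
      using sat that \<open>u \<in> ninc inc nm b\<close> \<open>b \<in> F\<close> FA unfolding strongly_saturated_def by blast
    moreover have "attacks inc nm (minarg u) b"
      using \<open>u \<in> ninc inc nm b\<close> unfolding attacks_def by simp
    ultimately show False
      using minarg_not_attacks_extension[OF lang args S(1) _ F] SFA
        SentE_subset_language[OF args] \<open>b \<in> F\<close> by blast
  qed
  then show "b \<in> InitCand inc nm A (S \<union> SentE F)"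
    using \<open>b \<in> F\<close> FA unfolding InitCand_def SentE_def by blast
qed

lemma preferred_Arg_w_Un_SentE:
  assumes SBAF: "SBAF L inc nm A" and sat: "strongly_saturated inc nm A"
    and S: "compatible inc S" "S \<subseteq> SentE A"
    and F: "preferred A (attacks inc nm) F" "Init inc nm A S \<subseteq> F"
  shows "Arg_w inc nm A (S \<union> SentE F) = F"
    and "weakly_adequate inc nm A (S \<union> SentE F)"
proof -
  let ?S' = "S \<union> SentE F"
  have admF: "admissible A (attacks inc nm) F"
    using F(1) unfolding preferred_def by blast
  have S': "compatible inc ?S'"
    using compatible_Un_SentE[OF SBAF sat S admF F(2)] .
  have "F \<subseteq> Init inc nm A ?S'"
    using admissible_subset_Init[OF S'] subset_InitCand_Un_SentE[OF SBAF sat S admF F(2)] admF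
    by blast
  then have Init_eq: "Init inc nm A ?S' = F"
    using F(1) admissible_Init[OF S'] unfolding preferred_def by blast
  have "RS inc nm A ?S' F \<subseteq> F"
    using preferred_defended_mem[OF F(1)] unfolding RS_def by blast
  then have "RS inc nm A ?S' F = F"
    using Init_subset_RS[OF S'] unfolding Init_eq by blast
  then show Arg_w_eq: "Arg_w inc nm A ?S' = F"
    using Arg_w_eq_Init[of ?S'] unfolding Init_eq by blast
  have "?S' \<subseteq> SentE A"
    using S(2) SentE_mono admF unfolding admissible_def by blast
  moreover have "Sent a \<subseteq> ?S'" if "a \<in> F" for a
    using that unfolding SentE_def by blast
  ultimately show "weakly_adequate inc nm A ?S'"
    using S' unfolding weakly_adequate_def Arg_w_eq by blast
qed

end

theorem mainTheorem18:
  fixes L :: "'s set" and inc :: "'s \<Rightarrow> 's set" and nm :: "'s arg \<Rightarrow> 's option"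
    and A :: "'s arg set" and E :: "'s arg set"
  assumes "SBAF L inc nm A"
    and "strongly_saturated inc nm A"
    and "E \<subseteq> A"
    and "confident_weakly_coherent inc nm A E"
  shows "preferred A (attacks inc nm) E"
proof -
  obtain S where S: "confident inc nm A S" and E: "E = Arg_w inc nm A S"
    and admE: "admissible A (attacks inc nm) E"
    using assms(4) unfolding confident_weakly_coherent_def weakly_coherent_def by blast
  have comp: "compatible inc S" and SA: "S \<subseteq> SentE A"
    using S unfolding confident_def weakly_adequate_def by auto
  show ?thesis
  proof (rule preferredI_preferred_supersets[OF _ admE])
    show "finite A"
      using assms(1) unfolding SBAF_def by blast
    fix F assume F: "preferred A (attacks inc nm) F" "E \<subseteq> F"
    then have "Init inc nm A S \<subseteq> F"
      using Init_subset_Arg_w[OF comp] E by blast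
    note extension = preferred_Arg_w_Un_SentE[OF assms(1,2) comp SA F(1) this]
    then have "S \<union> SentE F = S"
      using S unfolding confident_def by blast
    then show "F \<subseteq> E"
      using extension(1) E by simp
  qed
qed

end
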